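(* For every $\gamma\ge0$, $\bar{\mathcal R}_\gamma=\mathcal R_\gamma$. Equivalently, $\mathcal R_\gamma\times\{\gamma\}$ is exactly the set of triples $(E_1,E_2,E_\Omega)$ with $E_\Omega=\gamma$ that are achievable by fixed-length tests with a rejection option.
   Context: Standing assumptions: $\mathcal X$ is a finite set and $\mathsf P_1,\mathsf P_2$ are two distinct probability mass functions on $\mathcal X$, both with full support. Under hypothesis $H_i$ the observations $X_1,X_2,\dots$ are i.i.d. with law $\mathsf P_i$, and $\mathsf P_i(\cdot)$ denotes probability under $H_i$. $\gamma$-almost-fixed-length region: $(E_1,E_2)\in\mathcal R_\gamma$ if for every $\delta>0$ there exist $l\in\mathbb Z^+$, $C>0$, $n_0$, and for every $n\ge n_0$ a test $(\tau_n,d_n)$ with: - $\tau_n$ a stopping time for the natural filtration of $X_1,X_2,\dots$, and $d_n\in\{1,2\}$ a function of $X_1,\dots,X_{\tau_n}$; - $\tau_n\le Cn^l$; - $\mathsf P_i(\tau_n>n)\le e^{-\gamma n}$ for $i=1,2$; - $\mathsf P_1(d_n=2)\le e^{-(E_1-\delta)n}$; - $\mathsf P_2(d_n=1)\le e^{-(E_2-\delta)n}$. Tests with rejection option: a fixed-length test with rejection option on $n$ samples is a partition of $\mathcal X^n$ into three sets $A_1^n,A_2^n,A_\Omega^n$. On $A_i^n$ it accepts $H_i$; on $A_\Omega^n$ it rejects both hypotheses. Region $\bar{\mathcal R}_\gamma$: for $\gamma\ge0$, $(E_1,E_2)\in\bar{\mathcal R}_\gamma$ if for every $\delta>0$ there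 exist $n_0$ and, for every $n\ge n_0$, such a partition with: - $\mathsf P_1((X_1,\dots,X_n)\in A_2^n)\le e^{-(E_1-\delta)n}$; - $\mathsf P_2((X_1,\dots,X_n)\in A_1^n)\le e^{-(E_2-\delta)n}$; - $\mathsf P_1((X_1,\dots,X_n)\in A_\Omega^n)+\mathsf P_2((X_1,\dots,X_n)\in A_\Omega^n)\le e^{-(\gamma-\delta)n}$. *)

theory Defs
  imports "HOL-Probability.Probability"
begin

text \<open>Probability, under i.i.d. law P, that the first n observations form a word in S
  (S is a set of words of one fixed length n): the product measure of S.\<close>
definition wprob :: "'a pmf \<Rightarrow> 'a list set \<Rightarrow> real" where
  "wprob P S = (\<Sum>w\<in>S. \<Prod>x\<leftarrow>w. pmf P x)"

text \<open>A stopping rule: stop w means "stop after having observed exactly the prefix w". Every stopping time of the natural filtration has this form.\<close>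
definition stime :: "('a list \<Rightarrow> bool) \<Rightarrow> 'a list \<Rightarrow> nat" where
  "stime stp w = (LEAST k. stp (take k w))"

definition seq_test :: "nat \<Rightarrow> ('a list \<Rightarrow> bool) \<Rightarrow> ('a list \<Rightarrow> nat) \<Rightarrow> bool" where
  "seq_test N stp dec \<longleftrightarrow>
     (\<forall>w. length w = N \<longrightarrow> (\<exists>k\<le>N. stp (take k w))) \<and> (\<forall>w. dec w \<in> {1,2})"

definition sdec :: "('a list \<Rightarrow> bool) \<Rightarrow> ('a list \<Rightarrow> nat) \<Rightarrow> 'a list \<Rightarrow> nat" where
  "sdec stp dec w = dec (take (stime stp w) w)"

text \<open>gamma-almost-fixed-length region R_gamma.\<close>
definition R_seq :: "'a pmf \<Rightarrow> 'a pmf \<Rightarrow> real \<Rightarrow> (real \<times> real) set" where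
  "R_seq P1 P2 \<gamma> = {(E1, E2). \<forall>\<delta>>0. \<exists>l::nat. l \<ge> 1 \<and> (\<exists>C::real. C > 0 \<and> (\<exists>n0. \<forall>n\<ge>n0.
      \<exists>N stp dec. real N \<le> C * real n ^ l \<and> seq_test N stp dec \<and>
        wprob P1 {w. length w = N \<and> stime stp w > n} \<le> exp (- \<gamma> * real n) \<and>
        wprob P2 {w. length w = N \<and> stime stp w > n} \<le> exp (- \<gamma> * real n) \<and>
        wprob P1 {w. length w = N \<and> sdec stp dec w = 2} \<le> exp (- (E1 - \<delta>) * real n) \<and>
        wprob P2 {w. length w = N \<and> sdec stp dec w = 1} \<le> exp (- (E2 - \<delta>) * real n)))}"

definition partition3 :: "nat \<Rightarrow> 'a list set \<Rightarrow> 'a list set \<Rightarrow> 'a list set \<Rightarrow> bool" where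
  "partition3 n A1 A2 AO \<longleftrightarrow> A1 \<union> A2 \<union> AO = {w. length w = n} \<and>
     A1 \<inter> A2 = {} \<and> A1 \<inter> AO = {} \<and> A2 \<inter> AO = {}"

text \<open>Region of fixed-length tests with rejection option, \bar R_gamma.\<close>
definition R_rej :: "'a pmf \<Rightarrow> 'a pmf \<Rightarrow> real \<Rightarrow> (real \<times> real) set" where
  "R_rej P1 P2 \<gamma> = {(E1, E2). \<forall>\<delta>>0. \<exists>n0. \<forall>n\<ge>n0. \<exists>A1 A2 AO. partition3 n A1 A2 AO \<and>
      wprob P1 A2 \<le> exp (- (E1 - \<delta>) * real n) \<and>
      wprob P2 A1 \<le> exp (- (E2 - \<delta>) * real n) \<and>
      wprob P1 AO + wprob P2 AO \<le> exp (- (\<gamma> - \<delta>) * real n)}"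

end

theory Submission
  imports Defs "HOL-Real_Asymp.Real_Asymp"
begin

text \<open>
  Stopping a sequential test at time \<open>n\<close>, and rejecting whenever it has not stopped yet, gives a
  test with rejection option whose rejection and error probabilities are bounded by those of the
  sequential test; hence \<open>R_seq \<subseteq> R_rej\<close>.

  Conversely, replace a test with rejection option by one whose regions are unions of type classes:
  reject \<open>v\<close> when both \<open>P\<^sub>1(T v)\<close> and \<open>P\<^sub>2(T v)\<close> exceed the targeted error levels. As there
  are only polynomially many type classes, the error exponents survive. An amplification argument
  shows that every type class left in the rejection region has probability at most
  \<open>exp (-(\<gamma> + \<epsilon>) n)\<close> under both hypotheses: otherwise, for a heavy type class \<open>T z\<close>, a third of the
  equiprobable words of the type class of \<open>v\<^sup>q z\<close> would lie in one region of the given test at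
  length \<open>(q + 1) n\<close> and violate one of its three exponents. So the rejection probability is at most
  \<open>exp (-\<gamma> n)\<close> under each hypothesis separately. On rejection, the sequential test observes
  \<open>K n\<close> further samples and applies the likelihood-ratio test, whose error probabilities are at
  most \<open>\<rho>\<^sup>K\<^sup>n\<close> for the Bhattacharyya coefficient \<open>\<rho> < 1\<close>; for large \<open>K\<close> this is negligible,
  and the test never uses more than \<open>(K + 1) n\<close> samples.
\<close>

lemma finite_lists_length: "finite {w::'a::finite list. length w = n}"
  using finite_lists_length_eq[of "UNIV::'a set" n] by simp

lemma sum_prod_list_lists_length:
  fixes f :: "'a::finite \<Rightarrow> real"
  shows "(\<Sum>w | length w = n. \<Prod>x\<leftarrow>w. f x) = (\<Sum>x\<in>UNIV. f x) ^ n"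
proof (induction n)
  case (Suc n)
  have cons: "{w::'a list. length w = Suc n} = (\<lambda>(x, w). x # w) ` (UNIV \<times> {w. length w = n})"
    by (auto simp: length_Suc_conv image_iff)
  have inj: "inj_on (\<lambda>(x, w). x # w) (UNIV \<times> {w::'a list. length w = n})"
    by (auto simp: inj_on_def)
  have "(\<Sum>w | length w = Suc n. \<Prod>x\<leftarrow>w. f x)
      = (\<Sum>(x, w)\<in>UNIV \<times> {w::'a list. length w = n}. f x * (\<Prod>y\<leftarrow>w. f y))"
    unfolding cons by (subst sum.reindex[OF inj]) (auto intro!: sum.cong)
  also have "\<dots> = (\<Sum>x\<in>UNIV. f x) * (\<Sum>w | length w = n. \<Prod>x\<leftarrow>w. f x)"
    by (simp add: sum_product sum.cartesian_product split_def)
  finally show ?case using Suc by simp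
qed simp

lemma wprob_lists_length: "wprob (P::'a::finite pmf) {w. length w = n} = 1"
  unfolding wprob_def sum_prod_list_lists_length by (simp add: sum_pmf_eq_1)

lemma wprob_nonneg: "wprob P S \<ge> 0"
  unfolding wprob_def by (auto intro!: sum_nonneg prod_list_nonneg)

lemma wprob_mono: "S \<subseteq> T \<Longrightarrow> finite T \<Longrightarrow> wprob P S \<le> wprob P T"
  unfolding wprob_def by (rule sum_mono2) (auto intro!: prod_list_nonneg)

lemma wprob_le_1: "S \<subseteq> {w. length w = n} \<Longrightarrow> wprob (P::'a::finite pmf) S \<le> 1"
  using wprob_mono[of S "{w. length w = n}" P] finite_lists_length wprob_lists_length by metis

lemma wprob_union_le: "finite A \<Longrightarrow> finite B \<Longrightarrow> wprob P (A \<union> B) \<le> wprob P A + wprob P B"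
  unfolding wprob_def
  by (subst sum.union_inter[symmetric]) (auto intro!: sum_nonneg prod_list_nonneg)

lemma wprob_singleton: "wprob P {v} = (\<Prod>x\<leftarrow>v. pmf P x)"
  by (simp add: wprob_def)

lemma wprob_append_image:
  assumes "S \<subseteq> {w. length w = n}" "finite S" "finite T"
  shows "wprob P ((\<lambda>(x, y). x @ y) ` (S \<times> T)) = wprob P S * wprob P T"
proof -
  have inj: "inj_on (\<lambda>(x, y). x @ y) (S \<times> T)"
  proof (rule inj_onI, clarify)
    fix x y x' y' assume "x \<in> S" "x' \<in> S" "x @ y = x' @ y'"
    then show "x = x' \<and> y = y'" using assms(1) append_eq_append_conv[of x x' y y'] by auto
  qed
  show ?thesis unfolding wprob_def
    by (subst sum.reindex[OF inj]) (simp add: sum_product sum.cartesian_product split_def)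
qed

lemma wprob_take_drop:
  "wprob (P::'a::finite pmf) {w. length w = n + m \<and> A (take n w) \<and> B (drop n w)}
   = wprob P {v. length v = n \<and> A v} * wprob P {v. length v = m \<and> B v}"
proof -
  have "{w. length w = n + m \<and> A (take n w) \<and> B (drop n w)}
      = (\<lambda>(x, y). x @ y) ` ({v. length v = n \<and> A v} \<times> {v. length v = m \<and> B v})"
    by (auto intro!: image_eqI[where x = "(take n w, drop n w)" for w])
  moreover have "finite {v::'a list. length v = k \<and> C v}" for k C
    by (rule finite_subset[OF _ finite_lists_length[of k]]) auto
  ultimately show ?thesis by (simp only:) (rule wprob_append_image[where n = n]; auto)
qed

lemma wprob_take:
  assumes "n \<le> m"
  shows "wprob (P::'a::finite pmf) {w. length w = m \<and> A (take n w)} = wprob P {v. length v = n \<and> A v}"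
proof -
  have "{w. length w = m \<and> A (take n w)} = {w. length w = n + (m - n) \<and> A (take n w) \<and> True}"
    using assms by auto
  then show ?thesis using wprob_take_drop[of P n "m - n" A "\<lambda>_. True"] wprob_lists_length[of P]
    by simp
qed

lemma wprob_take_mem:
  assumes "X \<subseteq> {v. length v = n}" "n \<le> m"
  shows "wprob (P::'a::finite pmf) {w. length w = m \<and> take n w \<in> X} = wprob P X"
proof -
  have "{v. length v = n \<and> v \<in> X} = X" using assms(1) by blast
  then show ?thesis using wprob_take[OF assms(2), of P "\<lambda>v. v \<in> X"] by simp
qed

lemma wprob_prefix_event:
  assumes "X \<subseteq> {v. length v = n}"
    and "\<And>u. length u = max n N \<Longrightarrow> take n u \<in> X \<longleftrightarrow> Y (take N u)"
  shows "wprob (P::'a::finite pmf) X = wprob P {w. length w = N \<and> Y w}"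
proof -
  have "wprob P X = wprob P {u. length u = max n N \<and> take n u \<in> X}"
    using wprob_take_mem[OF assms(1)] by simp
  also have "{u. length u = max n N \<and> take n u \<in> X} = {u. length u = max n N \<and> Y (take N u)}"
    using assms(2) by blast
  also have "wprob P \<dots> = wprob P {w. length w = N \<and> Y w}" by (rule wprob_take) simp
  finally show ?thesis .
qed

lemma wprob_le_prefix_or_suffix:
  assumes "X \<subseteq> {v. length v = n}"
    and "\<And>w. length w = n + m \<Longrightarrow> Q w \<Longrightarrow> take n w \<in> X \<or> R (drop n w)"
  shows "wprob (P::'a::finite pmf) {w. length w = n + m \<and> Q w} \<le> wprob P X + wprob P {v. length v = m \<and> R v}"
proof -
  have finite: "finite {w::'a list. length w = n + m \<and> S w}" for S
    by (rule finite_subset[OF _ finite_lists_length[of "n + m"]]) auto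
  have "wprob P {w. length w = n + m \<and> Q w}
      \<le> wprob P ({w. length w = n + m \<and> take n w \<in> X \<and> True}
          \<union> {w. length w = n + m \<and> True \<and> R (drop n w)})"
    by (rule wprob_mono) (use assms(2) in blast, intro finite_UnI finite)
  also have "\<dots> \<le> wprob P {w. length w = n + m \<and> take n w \<in> X \<and> True}
      + wprob P {w. length w = n + m \<and> True \<and> R (drop n w)}"
    by (rule wprob_union_le[OF finite finite])
  also have "\<dots> = wprob P X + wprob P {v. length v = m \<and> R v}"
    using wprob_take_mem[OF assms(1), of "n + m" P] wprob_take_drop[of P n m "\<lambda>_. True" R]
      wprob_lists_length[of P n]
    by simp
  finally show ?thesis .
qed

lemma two_le_exp: "\<delta> > 0 \<Longrightarrow> ln 2 / \<delta> \<le> real n \<Longrightarrow> 2 \<le> exp (\<delta> * real n)"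
  by (metis exp_ln exp_le_cancel_iff mult.commute pos_divide_le_eq zero_less_numeral)

lemma add_exp_le_exp:
  fixes a b x \<delta> E :: real
  assumes "2 \<le> exp (\<delta> / 2 * x)" "a \<le> exp (- (E - \<delta> / 2) * x)" "b \<le> exp (- E * x)"
    and "\<delta> \<ge> 0" "x \<ge> 0"
  shows "a + b \<le> exp (- (E - \<delta>) * x)"
proof -
  have "exp (- E * x) \<le> exp (- (E - \<delta> / 2) * x)"
    using assms(4,5) by (simp add: mult_right_mono algebra_simps)
  then have "a + b \<le> 2 * exp (- (E - \<delta> / 2) * x)" using assms(2,3) by linarith
  also have "\<dots> \<le> exp (\<delta> / 2 * x) * exp (- (E - \<delta> / 2) * x)"
    using assms(1) by (intro mult_right_mono) auto
  also have "\<dots> = exp (- (E - \<delta>) * x)" by (simp add: mult_exp_exp algebra_simps)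
  finally show ?thesis .
qed

lemma eventually_poly_less_exp:
  "\<eta> > 0 \<Longrightarrow> eventually (\<lambda>n::nat. K * (real n + 1) ^ d < exp (\<eta> * real n)) sequentially"
  by real_asymp

lemma eventually_poly_mult_exp_le:
  assumes "\<eta> > 0"
  shows "eventually (\<lambda>n. \<forall>a. real ((n + 1) ^ d) * exp (- a * real n) \<le> exp (- (a - \<eta>) * real n))
    sequentially"
  using eventually_poly_less_exp[OF assms, of 1 d]
proof (rule eventually_mono, intro allI)
  fix n :: nat and a assume "1 * (real n + 1) ^ d < exp (\<eta> * real n)"
  then have "real ((n + 1) ^ d) * exp (- a * real n) \<le> exp (\<eta> * real n) * exp (- a * real n)"
    by (intro mult_right_mono) (auto simp: add.commute)
  also have "\<dots> = exp (- (a - \<eta>) * real n)" by (simp add: mult_exp_exp algebra_simps)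
  finally show "real ((n + 1) ^ d) * exp (- a * real n) \<le> exp (- (a - \<eta>) * real n)" .
qed

lemma exponent_lt_of_power_le:
  fixes x p r k D a b c \<eta> :: real
  assumes "x > 0" "exp (- a * x) \<le> p" "exp (- b * x) \<le> D * r" "D \<ge> 0"
    and "p ^ q * r \<le> k * exp (- c * x)" "k * D < exp (\<eta> * x)"
  shows "c < real q * a + b + \<eta>"
proof -
  have "exp (- (real q * a + b) * x) = exp (- a * x) ^ q * exp (- b * x)"
    by (simp add: exp_of_nat_mult[symmetric] mult_exp_exp algebra_simps)
  also have "\<dots> \<le> p ^ q * (D * r)"
    using assms(2,3) order_trans[OF exp_ge_zero assms(2)]
    by (intro mult_mono power_mono zero_le_power) auto
  also have "\<dots> = D * (p ^ q * r)" by simp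
  also have "\<dots> \<le> k * D * exp (- c * x)"
    using mult_left_mono[OF assms(5,4)] by (simp add: mult_ac)
  also have "\<dots> < exp (\<eta> * x) * exp (- c * x)"
    using assms(6) by simp
  also have "\<dots> = exp ((\<eta> - c) * x)" by (simp add: mult_exp_exp algebra_simps)
  finally have "- (real q * a + b) * x < (\<eta> - c) * x" by simp
  then show ?thesis using \<open>x > 0\<close> by (simp add: mult_less_cancel_right)
qed

lemma exponent_gt_if_exp_less_wprob:
  fixes P :: "'a::finite pmf"
  assumes "exp (- (E - d) * real n) < wprob P S" "S \<subseteq> {w. length w = n}" "n > 0"
  shows "d < E"
proof -
  have "exp (- (E - d) * real n) < 1" using assms(1) wprob_le_1[OF assms(2), of P] by linarith
  then show ?thesis using \<open>n > 0\<close> by (simp add: mult_less_0_iff)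
qed

lemma exists_power_mult_le_exp:
  fixes \<rho> E :: real
  assumes "0 \<le> \<rho>" "\<rho> < 1"
  obtains K :: nat where "K \<ge> 1" "\<And>n. \<rho> ^ (K * n) \<le> exp (- E * real n)"
proof -
  obtain K0 where "\<rho> ^ K0 < exp (- E)" using real_arch_pow_inv[OF exp_gt_zero \<open>\<rho> < 1\<close>] by blast
  then have "\<rho> ^ Suc K0 \<le> exp (- E)"
    using power_decreasing[of K0 "Suc K0" \<rho>] assms by simp
  have "\<rho> ^ (Suc K0 * n) \<le> exp (- E * real n)" for n
  proof -
    have "\<rho> ^ (Suc K0 * n) = (\<rho> ^ Suc K0) ^ n" by (simp only: power_mult)
    also have "\<dots> \<le> exp (- E) ^ n"
      using \<open>\<rho> ^ Suc K0 \<le> exp (- E)\<close> assms(1) by (intro power_mono) auto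
    also have "\<dots> = exp (- E * real n)" by (simp add: exp_of_nat_mult[symmetric] mult.commute)
    finally show ?thesis .
  qed
  then show ?thesis using that[of "Suc K0"] by simp
qed

section \<open>Truncating a sequential test\<close>

lemma stime_eq_if_take_eq:
  assumes stop: "stp (take k u)" "k \<le> m" and eq: "take m v = take m u"
  shows "stime stp v = stime stp u" "stime stp u \<le> k"
proof -
  have take_eq: "take j v = take j u" if "j \<le> m" for j
    using eq that by (metis min.absorb1 take_take)
  show le: "stime stp u \<le> k"
    unfolding stime_def using stop(1) by (rule Least_le)
  have stopped: "stp (take (stime stp u) u)"
    unfolding stime_def using stop(1) by (rule LeastI)
  show "stime stp v = stime stp u"
    unfolding stime_def[of stp v]
  proof (rule Least_equality)
    show "stp (take (stime stp u) v)" using stopped take_eq le stop(2) by simp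
    fix j assume "stp (take j v)"
    then show "stime stp u \<le> j"
      using take_eq[of j] le stop(2) unfolding stime_def by (cases "j \<le> m") (auto intro: Least_le)
  qed
qed

lemma sdec_eq_if_take_eq:
  assumes "stp (take k u)" "k \<le> m" "take m v = take m u"
  shows "sdec stp dec v = sdec stp dec u"
proof -
  note stime = stime_eq_if_take_eq[of stp k u m v, OF assms]
  have "take (stime stp u) v = take (stime stp u) u"
    using stime(2) assms(2,3) by (metis min.absorb1 take_take order_trans)
  then show ?thesis unfolding sdec_def stime(1) by simp
qed

lemma seq_test_stops:
  assumes "seq_test N stp dec" "N \<le> length u"
  obtains k where "k \<le> N" "stp (take k u)"
proof -
  obtain k where "k \<le> N" "stp (take k (take N u))"
    using assms unfolding seq_test_def by (metis length_take min.absorb2)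
  then show ?thesis using that by (metis min.absorb1 take_take)
qed

lemma seq_test_take:
  assumes "seq_test N stp dec" "N \<le> length u"
  shows "stime stp (take N u) = stime stp u" "sdec stp dec (take N u) = sdec stp dec u"
    "stime stp u \<le> N"
proof -
  obtain k where "k \<le> N" "stp (take k u)" using seq_test_stops[OF assms] .
  then show "stime stp (take N u) = stime stp u" "sdec stp dec (take N u) = sdec stp dec u"
    "stime stp u \<le> N"
    using stime_eq_if_take_eq[of stp k u N "take N u"] sdec_eq_if_take_eq[of stp k u N "take N u"]
    by auto
qed

lemma stopped_take_iff:
  assumes "seq_test N stp dec" "N \<le> length u"
  shows "(\<exists>k\<le>n. stp (take k (take n u))) \<longleftrightarrow> stime stp u \<le> n"
proof
  assume "\<exists>k\<le>n. stp (take k (take n u))"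
  then obtain k where "k \<le> n" "stp (take k u)" by (metis min.absorb1 take_take)
  then show "stime stp u \<le> n" using stime_eq_if_take_eq(2)[of stp k u n u] by simp
next
  assume "stime stp u \<le> n"
  moreover obtain k where "stp (take k u)" using seq_test_stops[OF assms] by blast
  then have "stp (take (stime stp u) u)" unfolding stime_def by (rule LeastI)
  ultimately show "\<exists>k\<le>n. stp (take k (take n u))" by (metis min.absorb1 take_take)
qed

lemma sdec_take_if_stopped:
  assumes "\<exists>k\<le>n. stp (take k (take n u))"
  shows "sdec stp dec (take n u) = sdec stp dec u"
proof -
  obtain k where "k \<le> n" "stp (take k u)" using assms by (metis min.absorb1 take_take)
  then show ?thesis by (intro sdec_eq_if_take_eq[of stp k u n "take n u"]) simp_all
qed

lemma seq_test_truncation: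
  fixes stp :: "'a::finite list \<Rightarrow> bool"
  assumes test: "seq_test N stp dec"
  obtains A1 A2 AO where "partition3 n A1 A2 AO"
    "\<And>P. wprob P A2 = wprob P {w. length w = N \<and> stime stp w \<le> n \<and> sdec stp dec w = 2}"
    "\<And>P. wprob P A1 = wprob P {w. length w = N \<and> stime stp w \<le> n \<and> sdec stp dec w = 1}"
    "\<And>P. wprob P AO = wprob P {w. length w = N \<and> stime stp w > n}"
proof (rule that)
  define stopped where "stopped v \<longleftrightarrow> (\<exists>k\<le>n. stp (take k v))" for v :: "'a list"
  let ?A1 = "{v. length v = n \<and> stopped v \<and> sdec stp dec v = 1}"
  let ?A2 = "{v. length v = n \<and> stopped v \<and> sdec stp dec v = 2}"
  let ?AO = "{v. length v = n \<and> \<not> stopped v}"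
  have "sdec stp dec v \<in> {1, 2}" for v using test unfolding seq_test_def sdec_def by blast
  then show "partition3 n ?A1 ?A2 ?AO" unfolding partition3_def by fastforce
  have prefix: "stopped (take n u) \<longleftrightarrow> stime stp (take N u) \<le> n"
    "stopped (take n u) \<Longrightarrow> sdec stp dec (take n u) = sdec stp dec (take N u)"
    if "length u = max n N" for u
  proof -
    have "N \<le> length u" using that by simp
    note take_N = seq_test_take[OF test this]
    show "stopped (take n u) \<longleftrightarrow> stime stp (take N u) \<le> n"
      using stopped_take_iff[OF test \<open>N \<le> length u\<close>, of n] take_N(1) unfolding stopped_def by simp
    show "stopped (take n u) \<Longrightarrow> sdec stp dec (take n u) = sdec stp dec (take N u)"
      using sdec_take_if_stopped[of n stp u dec] take_N(2) unfolding stopped_def by simp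
  qed
  fix P :: "'a pmf"
  show "wprob P ?A2 = wprob P {w. length w = N \<and> stime stp w \<le> n \<and> sdec stp dec w = 2}"
  proof (rule wprob_prefix_event)
    fix u :: "'a list" assume "length u = max n N"
    then show "take n u \<in> ?A2 \<longleftrightarrow> stime stp (take N u) \<le> n \<and> sdec stp dec (take N u) = 2"
      using prefix[of u] by auto
  qed auto
  show "wprob P ?A1 = wprob P {w. length w = N \<and> stime stp w \<le> n \<and> sdec stp dec w = 1}"
  proof (rule wprob_prefix_event)
    fix u :: "'a list" assume "length u = max n N"
    then show "take n u \<in> ?A1 \<longleftrightarrow> stime stp (take N u) \<le> n \<and> sdec stp dec (take N u) = 1"
      using prefix[of u] by auto
  qed auto
  show "wprob P ?AO = wprob P {w. length w = N \<and> stime stp w > n}"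
  proof (rule wprob_prefix_event)
    fix u :: "'a list" assume "length u = max n N"
    then show "take n u \<in> ?AO \<longleftrightarrow> stime stp (take N u) > n"
      using prefix[of u] by auto
  qed auto
qed

lemma R_seq_subset_R_rej: "R_seq (P1::'a::finite pmf) P2 \<gamma> \<subseteq> R_rej P1 P2 \<gamma>"
proof (clarify, unfold R_rej_def, clarify)
  fix E1 E2 \<delta> :: real assume seq: "(E1, E2) \<in> R_seq P1 P2 \<gamma>" and "\<delta> > 0"
  then obtain l C n0 where tests: "\<forall>n\<ge>n0.
      \<exists>N stp dec. real N \<le> C * real n ^ l \<and> seq_test N stp dec \<and>
        wprob P1 {w. length w = N \<and> stime stp w > n} \<le> exp (- \<gamma> * real n) \<and>
        wprob P2 {w. length w = N \<and> stime stp w > n} \<le> exp (- \<gamma> * real n) \<and>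
        wprob P1 {w. length w = N \<and> sdec stp dec w = 2} \<le> exp (- (E1 - \<delta>) * real n) \<and>
        wprob P2 {w. length w = N \<and> sdec stp dec w = 1} \<le> exp (- (E2 - \<delta>) * real n)"
    unfolding R_seq_def by blast
  show "\<exists>n0. \<forall>n\<ge>n0. \<exists>A1 A2 AO. partition3 n A1 A2 AO \<and>
      wprob P1 A2 \<le> exp (- (E1 - \<delta>) * real n) \<and>
      wprob P2 A1 \<le> exp (- (E2 - \<delta>) * real n) \<and>
      wprob P1 AO + wprob P2 AO \<le> exp (- (\<gamma> - \<delta>) * real n)"
  proof (intro exI[of _ "max n0 (nat \<lceil>ln 2 / \<delta>\<rceil>)"] allI impI)
    fix n assume n: "max n0 (nat \<lceil>ln 2 / \<delta>\<rceil>) \<le> n"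
    then have "n0 \<le> n" by simp
    from tests[rule_format, OF this] obtain N stp dec where test: "seq_test N stp dec"
      and rej: "wprob P1 {w. length w = N \<and> stime stp w > n} \<le> exp (- \<gamma> * real n)"
        "wprob P2 {w. length w = N \<and> stime stp w > n} \<le> exp (- \<gamma> * real n)"
      and err: "wprob P1 {w. length w = N \<and> sdec stp dec w = 2} \<le> exp (- (E1 - \<delta>) * real n)"
        "wprob P2 {w. length w = N \<and> sdec stp dec w = 1} \<le> exp (- (E2 - \<delta>) * real n)"
      by blast
    obtain A1 A2 AO where A: "partition3 n A1 A2 AO"
      "\<And>P. wprob P A2 = wprob P {w. length w = N \<and> stime stp w \<le> n \<and> sdec stp dec w = 2}"
      "\<And>P. wprob P A1 = wprob P {w. length w = N \<and> stime stp w \<le> n \<and> sdec stp dec w = 1}"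
      "\<And>P. wprob P AO = wprob P {w. length w = N \<and> stime stp w > n}"
      using seq_test_truncation[OF test, where n = n] by blast
    have finite_N: "finite {w::'a list. length w = N \<and> Y w}" for Y
      by (rule finite_subset[OF _ finite_lists_length[of N]]) auto
    have "wprob P A2 \<le> wprob P {w. length w = N \<and> sdec stp dec w = 2}"
      "wprob P A1 \<le> wprob P {w. length w = N \<and> sdec stp dec w = 1}" for P
      unfolding A(2,3) by (auto intro!: wprob_mono finite_N)
    have "ln 2 / \<delta> \<le> real n" using n by linarith
    then have two: "2 \<le> exp (\<delta> * real n)" using two_le_exp \<open>\<delta> > 0\<close> by blast
    have "wprob P1 AO + wprob P2 AO \<le> 2 * exp (- \<gamma> * real n)"
      using A(4)[of P1] A(4)[of P2] rej by simp
    also have "\<dots> \<le> exp (\<delta> * real n) * exp (- \<gamma> * real n)"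
      using two by (intro mult_right_mono) auto
    also have "\<dots> = exp (- (\<gamma> - \<delta>) * real n)" by (simp add: mult_exp_exp algebra_simps)
    finally show "\<exists>A1 A2 AO. partition3 n A1 A2 AO \<and>
      wprob P1 A2 \<le> exp (- (E1 - \<delta>) * real n) \<and>
      wprob P2 A1 \<le> exp (- (E2 - \<delta>) * real n) \<and>
      wprob P1 AO + wprob P2 AO \<le> exp (- (\<gamma> - \<delta>) * real n)"
      using A(1) \<open>wprob P1 A2 \<le> _\<close> \<open>wprob P2 A1 \<le> _\<close> err by (meson order_trans)
  qed
qed

section \<open>Type classes\<close>

definition type_class_of :: "'a list \<Rightarrow> 'a list set" where
  "type_class_of v = {u. mset u = mset v}"

lemma type_class_subset_lists_length: "type_class_of v \<subseteq> {u. length u = length v}"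
  unfolding type_class_of_def by (auto dest: mset_eq_length)

lemma finite_type_class: "finite (type_class_of (v::'a::finite list))"
  using finite_subset[OF type_class_subset_lists_length finite_lists_length] .

lemma in_type_class_self: "v \<in> type_class_of v"
  unfolding type_class_of_def by simp

lemma prod_list_map_eq_if_mset_eq:
  fixes f :: "'a \<Rightarrow> real"
  assumes "mset u = mset v"
  shows "(\<Prod>x\<leftarrow>u. f x) = (\<Prod>x\<leftarrow>v. f x)"
  by (metis assms mset_map prod_mset_prod_list)

lemma wprob_type_class_Int:
  "wprob P (type_class_of v \<inter> X) = real (card (type_class_of v \<inter> X)) * (\<Prod>x\<leftarrow>v. pmf P x)"
proof -
  have "wprob P (type_class_of v \<inter> X) = (\<Sum>u\<in>type_class_of v \<inter> X. \<Prod>x\<leftarrow>v. pmf P x)"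
    unfolding wprob_def
    by (rule sum.cong) (auto simp: type_class_of_def intro: prod_list_map_eq_if_mset_eq)
  then show ?thesis by simp
qed

lemma wprob_type_class_append:
  "wprob (P::'a::finite pmf) (type_class_of a) * wprob P (type_class_of b) \<le> wprob P (type_class_of (a @ b))"
proof -
  have "wprob P (type_class_of a) * wprob P (type_class_of b)
      = wprob P ((\<lambda>(x, y). x @ y) ` (type_class_of a \<times> type_class_of b))"
    by (rule wprob_append_image[OF type_class_subset_lists_length finite_type_class
          finite_type_class, symmetric])
  also have "\<dots> \<le> wprob P (type_class_of (a @ b))"
    by (rule wprob_mono[OF _ finite_type_class]) (auto simp: type_class_of_def)
  finally show ?thesis .
qed

lemma wprob_type_class_power:
  "wprob (P::'a::finite pmf) (type_class_of v) ^ q * wprob P (type_class_of z)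
   \<le> wprob P (type_class_of (concat (replicate q v) @ z))"
proof (induction q)
  case (Suc q)
  have "wprob P (type_class_of v) ^ Suc q * wprob P (type_class_of z)
      = wprob P (type_class_of v) * (wprob P (type_class_of v) ^ q * wprob P (type_class_of z))"
    by simp
  also have "\<dots> \<le> wprob P (type_class_of v) * wprob P (type_class_of (concat (replicate q v) @ z))"
    using Suc wprob_nonneg by (intro mult_left_mono) auto
  also have "\<dots> \<le> wprob P (type_class_of (v @ concat (replicate q v) @ z))"
    by (rule wprob_type_class_append)
  finally show ?case by simp
qed simp

lemma wprob_type_class_ge_power:
  assumes "\<And>x. m \<le> pmf P x" "0 \<le> m"
  shows "m ^ length z \<le> wprob (P::'a::finite pmf) (type_class_of z)"
proof -
  have "m ^ length z \<le> (\<Prod>x\<leftarrow>z. pmf P x)"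
    using assms by (induction z) (auto intro: mult_mono order_trans)
  also have "\<dots> = wprob P {z}" by (simp add: wprob_def)
  also have "\<dots> \<le> wprob P (type_class_of z)"
    by (rule wprob_mono[OF _ finite_type_class]) (simp add: in_type_class_self)
  finally show ?thesis .
qed

lemma card_type_classes:
  "card (type_class_of ` {v::'a::finite list. length v = n}) \<le> (n + 1) ^ CARD('a)"
proof -
  have "type_class_of ` {v::'a list. length v = n} = (\<lambda>M. {u. mset u = M}) ` mset ` {v. length v = n}"
    unfolding type_class_of_def by auto
  then have "card (type_class_of ` {v::'a list. length v = n}) \<le> card (mset ` {v::'a list. length v = n})"
    by (metis card_image_le finite_imageI finite_lists_length)
  also have "\<dots> = card (count ` mset ` {v::'a list. length v = n})"
    by (simp add: card_image inj_on_def count_inject)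
  also have "\<dots> \<le> card (PiE UNIV (\<lambda>_::'a. {0..n}))"
  proof (rule card_mono)
    show "finite (PiE UNIV (\<lambda>_::'a. {0..n}))" by (intro finite_PiE) auto
    show "count ` mset ` {v::'a list. length v = n} \<subseteq> PiE UNIV (\<lambda>_. {0..n})"
    proof (rule subsetI)
      fix g assume "g \<in> count ` mset ` {v::'a list. length v = n}"
      then obtain v :: "'a list" where "length v = n" "g = count (mset v)" by auto
      moreover from this have "count (mset v) x \<le> n" for x using count_le_size[of "mset v" x] by simp
      ultimately show "g \<in> PiE UNIV (\<lambda>_. {0..n})" by (simp add: PiE_UNIV_domain)
    qed
  qed
  also have "\<dots> = (n + 1) ^ CARD('a)" by (simp add: card_PiE)
  finally show ?thesis .
qed

lemma wprob_le_sum_type_classes: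
  assumes "A \<subseteq> {v::'a::finite list. length v = n}"
  shows "wprob P A \<le> (\<Sum>C\<in>type_class_of ` A. wprob P C)"
proof -
  have "finite A" using finite_subset[OF assms finite_lists_length] .
  then have "wprob P A = (\<Sum>C\<in>type_class_of ` A. \<Sum>u\<in>{u\<in>A. type_class_of u = C}. \<Prod>x\<leftarrow>u. pmf P x)"
    unfolding wprob_def by (intro sum.group[symmetric]) auto
  also have "\<dots> \<le> (\<Sum>C\<in>type_class_of ` A. wprob P C)"
  proof (rule sum_mono)
    fix C assume "C \<in> type_class_of ` A"
    then have "{u\<in>A. type_class_of u = C} \<subseteq> C" "finite C"
      using in_type_class_self finite_type_class by auto
    then show "(\<Sum>u\<in>{u\<in>A. type_class_of u = C}. \<Prod>x\<leftarrow>u. pmf P x) \<le> wprob P C"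
      using wprob_mono unfolding wprob_def by blast
  qed
  finally show ?thesis .
qed

lemma wprob_le_if_type_classes_le:
  assumes "A \<subseteq> {v::'a::finite list. length v = n}"
    and "\<And>v. v \<in> A \<Longrightarrow> wprob P (type_class_of v) \<le> t" and "t \<ge> 0"
  shows "wprob P A \<le> real ((n + 1) ^ CARD('a)) * t"
proof -
  have "card (type_class_of ` A) \<le> card (type_class_of ` {v::'a list. length v = n})"
    using assms(1) by (intro card_mono finite_imageI finite_lists_length image_mono)
  also have "\<dots> \<le> (n + 1) ^ CARD('a)" by (rule card_type_classes)
  finally have card: "real (card (type_class_of ` A)) \<le> real ((n + 1) ^ CARD('a))"
    by (rule of_nat_mono)
  have "wprob P A \<le> (\<Sum>C\<in>type_class_of ` A. wprob P C)"
    by (rule wprob_le_sum_type_classes[OF assms(1)])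
  also have "\<dots> \<le> real (card (type_class_of ` A)) * t"
    by (rule sum_bounded_above) (use assms(2) in auto)
  also have "\<dots> \<le> real ((n + 1) ^ CARD('a)) * t"
    using card \<open>t \<ge> 0\<close> by (rule mult_right_mono)
  finally show ?thesis .
qed

lemma exists_heavy_type_class:
  "\<exists>z::'a::finite list. length z = n \<and> 1 \<le> real ((n + 1) ^ CARD('a)) * wprob P (type_class_of z)"
proof (rule ccontr)
  let ?D = "real ((n + 1) ^ CARD('a))"
  let ?classes = "type_class_of ` {v::'a list. length v = n}"
  assume "\<not> ?thesis"
  then have light: "wprob P C < 1 / ?D" if "C \<in> ?classes" for C
    using that by (auto simp: field_simps)
  have "(1::real) = wprob P {v::'a list. length v = n}" by (simp add: wprob_lists_length)
  also have "\<dots> \<le> (\<Sum>C\<in>?classes. wprob P C)"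
    by (rule wprob_le_sum_type_classes[where n = n]) simp
  also have "\<dots> < real (card ?classes) * (1 / ?D)"
  proof (rule sum_bounded_above_strict[OF light])
    show "card ?classes > 0"
      using finite_lists_length[of n] by (auto simp: card_gt_0_iff intro!: exI[of _ "replicate n undefined"])
  qed
  also have "\<dots> \<le> 1"
  proof -
    have "real (card ?classes) \<le> ?D"
      using card_type_classes[where 'a = 'a, of n] by (simp only: of_nat_le_iff)
    then show ?thesis by (simp add: divide_simps)
  qed
  finally show False by simp
qed

lemma type_class_majority:
  fixes A1 A2 AO :: "'a::finite list set"
  assumes part: "partition3 n A1 A2 AO" and "length w = n"
  shows "\<exists>X\<in>{A1, A2, AO}. \<forall>P. wprob P (type_class_of w) \<le> 3 * wprob P X"
proof -
  let ?C = "type_class_of w"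
  have finite: "finite A1" "finite A2" "finite AO"
    using part finite_lists_length[of n] unfolding partition3_def by (metis finite_Un)+
  have "?C \<subseteq> A1 \<union> A2 \<union> AO"
    using part type_class_subset_lists_length[of w] \<open>length w = n\<close> unfolding partition3_def by auto
  then have "card ?C \<le> card ((?C \<inter> A1) \<union> (?C \<inter> A2) \<union> (?C \<inter> AO))"
    using finite by (intro card_mono) auto
  also have "\<dots> \<le> card (?C \<inter> A1) + card (?C \<inter> A2) + card (?C \<inter> AO)"
    by (metis card_Un_le add_le_mono1 order_trans)
  finally have "card ?C \<le> 3 * card (?C \<inter> A1) \<or> card ?C \<le> 3 * card (?C \<inter> A2)
      \<or> card ?C \<le> 3 * card (?C \<inter> AO)"
    by linarith
  then obtain X where X: "X \<in> {A1, A2, AO}" "card ?C \<le> 3 * card (?C \<inter> X)"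
    by blast
  have "wprob P ?C \<le> 3 * wprob P X" for P :: "'a pmf"
  proof -
    have "wprob P ?C = real (card ?C) * (\<Prod>x\<leftarrow>w. pmf P x)"
      using wprob_type_class_Int[of P w UNIV] by simp
    also have "\<dots> \<le> 3 * (real (card (?C \<inter> X)) * (\<Prod>x\<leftarrow>w. pmf P x))"
    proof -
      have "real (card ?C) \<le> 3 * real (card (?C \<inter> X))" using X(2) by linarith
      moreover have "(\<Prod>x\<leftarrow>w. pmf P x) \<ge> 0" by (rule prod_list_nonneg) auto
      ultimately show ?thesis by (simp add: mult.assoc[symmetric] mult_right_mono)
    qed
    also have "\<dots> = 3 * wprob P (?C \<inter> X)"
      by (simp add: wprob_type_class_Int)
    also have "\<dots> \<le> 3 * wprob P X"
      using X(1) finite by (auto intro: wprob_mono)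
    finally show ?thesis .
  qed
  with X(1) show ?thesis by blast
qed

lemma exists_type_class_partition:
  fixes P1 P2 :: "'a::finite pmf"
  assumes "t1 \<ge> 0" "t2 \<ge> 0"
  obtains A1 A2 AO where "partition3 n A1 A2 AO"
    "wprob P1 A2 \<le> real ((n + 1) ^ CARD('a)) * t1"
    "wprob P2 A1 \<le> real ((n + 1) ^ CARD('a)) * t2"
    "\<And>v. v \<in> AO \<Longrightarrow> t1 < wprob P1 (type_class_of v) \<and> t2 < wprob P2 (type_class_of v)"
proof
  let ?A2 = "{v::'a list. length v = n \<and> wprob P1 (type_class_of v) \<le> t1}"
  let ?A1 = "{v::'a list. length v = n \<and> t1 < wprob P1 (type_class_of v) \<and> wprob P2 (type_class_of v) \<le> t2}"
  let ?AO = "{v::'a list. length v = n \<and> t1 < wprob P1 (type_class_of v) \<and> t2 < wprob P2 (type_class_of v)}"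
  show "partition3 n ?A1 ?A2 ?AO" unfolding partition3_def by auto
  show "wprob P1 ?A2 \<le> real ((n + 1) ^ CARD('a)) * t1"
    using \<open>t1 \<ge> 0\<close> by (intro wprob_le_if_type_classes_le) auto
  show "wprob P2 ?A1 \<le> real ((n + 1) ^ CARD('a)) * t2"
    using \<open>t2 \<ge> 0\<close> by (intro wprob_le_if_type_classes_le) auto
qed auto

section \<open>Rejection regions made of light type classes\<close>

text \<open>
  By pigeonhole some \<open>z\<close> has a type class of \<open>P\<close>-probability at least
  \<open>1 / (n + 1)\<^sup>|\<^sup>A\<^sup>|\<close>. The type class of \<open>v\<^sup>q z\<close> has a third of its equiprobable words in one
  region \<open>X\<close> of the partition, so \<open>R(T v)\<^sup>q R(T z) \<le> 3 R(X)\<close> for both hypotheses \<open>R\<close>.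
\<close>
lemma type_class_amplification:
  fixes P Q :: "'a::finite pmf" and A1 A2 AO :: "'a list set"
  assumes part: "partition3 (Suc q * n) A1 A2 AO" and v: "length v = n" and "n > 0"
    and poly: "3 * (real n + 1) ^ CARD('a) < exp (\<eta> * real n)"
    and Q_types: "\<And>z. length z = n \<Longrightarrow> exp (- c * real n) \<le> wprob Q (type_class_of z)"
    and P_v: "exp (- a2 * real n) \<le> wprob P (type_class_of v)"
      "exp (- a0 * real n) \<le> wprob P (type_class_of v)"
    and Q_v: "exp (- b * real n) \<le> wprob Q (type_class_of v)"
    and A2: "wprob P A2 \<le> exp (- e2 * real n)" and A1: "wprob Q A1 \<le> exp (- e1 * real n)"
    and AO: "wprob P AO \<le> exp (- e0 * real n)"
  shows "e2 < real q * a2 + \<eta> \<or> e1 < real q * b + c + \<eta> \<or> e0 < real q * a0 + \<eta>"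
proof -
  define D where "D = real ((n + 1) ^ CARD('a))"
  have "D \<ge> 1" "3 * D < exp (\<eta> * real n)" unfolding D_def using poly by (simp_all add: add.commute)
  obtain z where z: "length z = n" "1 \<le> D * wprob P (type_class_of z)"
    using exists_heavy_type_class unfolding D_def by blast
  have "wprob Q (type_class_of z) \<le> D * wprob Q (type_class_of z)"
    using \<open>D \<ge> 1\<close> wprob_nonneg[of Q "type_class_of z"] by (simp add: mult_le_cancel_right1)
  with Q_types[OF z(1)] have "exp (- c * real n) \<le> D * wprob Q (type_class_of z)" by simp
  define w where "w = concat (replicate q v) @ z"
  have "length w = Suc q * n"
    unfolding w_def using v z(1) by (simp add: length_concat sum_list_replicate)
  obtain X where "X \<in> {A1, A2, AO}" and X: "\<And>R. wprob R (type_class_of w) \<le> 3 * wprob R X"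
    using type_class_majority[OF part \<open>length w = Suc q * n\<close>] by blast
  have exponent_lt: "e < real q * a + b + \<eta>"
    if "exp (- a * real n) \<le> wprob R (type_class_of v)"
      "exp (- b * real n) \<le> D * wprob R (type_class_of z)"
      "wprob R X \<le> exp (- e * real n)" for R a b e
  proof (rule exponent_lt_of_power_le[OF _ that(1,2)])
    show "wprob R (type_class_of v) ^ q * wprob R (type_class_of z) \<le> 3 * exp (- e * real n)"
      using wprob_type_class_power[of R v q z] X[of R] that(3) unfolding w_def by linarith
  qed (use \<open>n > 0\<close> \<open>D \<ge> 1\<close> \<open>3 * D < exp (\<eta> * real n)\<close> in auto)
  from \<open>X \<in> {A1, A2, AO}\<close> consider "X = A1" | "X = A2" | "X = AO" by blast
  then show ?thesis
  proof cases
    case 1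
    then show ?thesis
      using exponent_lt[OF Q_v \<open>exp (- c * real n) \<le> D * wprob Q (type_class_of z)\<close>] A1 by simp
  next
    case 2
    then show ?thesis using exponent_lt[of a2 P 0 e2] P_v(1) z(2) A2 by simp
  next
    case 3
    then show ?thesis using exponent_lt[of a0 P 0 e0] P_v(2) z(2) AO by simp
  qed
qed

text \<open>Parameters for which none of the three alternatives above can hold.\<close>
lemma exists_amplification_parameters:
  fixes c \<delta> \<gamma> :: real
  assumes "c \<ge> 0" "\<delta> > 0" "\<gamma> > 0"
  obtains \<epsilon> \<delta>' \<eta> :: real and q :: nat where "\<epsilon> > 0" "\<delta>' > 0" "\<eta> > 0"
    "\<And>E1 E2. \<delta> < E1 \<Longrightarrow> \<delta> < E2 \<Longrightarrow>
      real q * (E1 - \<delta>) + \<eta> \<le> real (Suc q) * (E1 - \<delta>') \<and>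
      real q * (E2 - \<delta>) + c + \<eta> \<le> real (Suc q) * (E2 - \<delta>') \<and>
      real q * (\<gamma> + \<epsilon>) + \<eta> \<le> real (Suc q) * (\<gamma> - \<delta>')"
proof
  define q :: nat where "q = nat \<lceil>(c + \<delta>) / \<delta>\<rceil> + 1"
  have "real q \<ge> (c + \<delta>) / \<delta>" unfolding q_def by linarith
  then have q_\<delta>: "c + \<delta> \<le> real q * \<delta>" using \<open>\<delta> > 0\<close> by (simp add: field_simps)
  have "q \<ge> 1" unfolding q_def by simp
  let ?\<epsilon> = "\<gamma> / (4 * real q)" and ?\<delta>' = "min \<delta> (\<gamma> / 4) / real (Suc q)" and ?\<eta> = "min \<delta> (\<gamma> / 2)"
  show "?\<epsilon> > 0" "?\<delta>' > 0" "?\<eta> > 0" using \<open>q \<ge> 1\<close> assms by simp_all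
  have \<epsilon>: "real q * ?\<epsilon> = \<gamma> / 4" using \<open>q \<ge> 1\<close> by simp
  have \<delta>': "real (Suc q) * ?\<delta>' = min \<delta> (\<gamma> / 4)" by (simp del: of_nat_Suc)
  fix E1 E2 assume "\<delta> < E1" "\<delta> < E2"
  then show "real q * (E1 - \<delta>) + ?\<eta> \<le> real (Suc q) * (E1 - ?\<delta>') \<and>
      real q * (E2 - \<delta>) + c + ?\<eta> \<le> real (Suc q) * (E2 - ?\<delta>') \<and>
      real q * (\<gamma> + ?\<epsilon>) + ?\<eta> \<le> real (Suc q) * (\<gamma> - ?\<delta>')"
    using q_\<delta> \<open>c \<ge> 0\<close> min.cobounded1[of \<delta> "\<gamma> / 2"] min.cobounded2[of \<delta> "\<gamma> / 2"]
      min.cobounded1[of \<delta> "\<gamma> / 4"] min.cobounded2[of \<delta> "\<gamma> / 4"]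
    unfolding right_diff_distrib distrib_left \<epsilon> \<delta>'
    by (simp only: of_nat_Suc distrib_right mult_1) (intro conjI; linarith)
qed

lemma R_rej_type_class_bound:
  fixes P Q :: "'a::finite pmf"
  assumes rej: "(E1, E2) \<in> R_rej P Q \<gamma>" and "\<gamma> > 0" "\<delta> > 0"
    and Q_min: "\<And>x. m \<le> pmf Q x" "m > 0"
  shows "\<exists>\<epsilon>>0. eventually (\<lambda>n. \<forall>v. length v = n \<longrightarrow>
     exp (- (E1 - \<delta>) * real n) < wprob P (type_class_of v) \<longrightarrow>
     exp (- (E2 - \<delta>) * real n) < wprob Q (type_class_of v) \<longrightarrow>
     wprob P (type_class_of v) \<le> exp (- (\<gamma> + \<epsilon>) * real n)) sequentially"
proof -
  define c where "c = - ln m"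
  have "m \<le> 1" using Q_min(1)[of undefined] pmf_le_1[of Q undefined] by linarith
  then have "c \<ge> 0" unfolding c_def using Q_min(2) by simp
  have Q_types: "exp (- c * real n) \<le> wprob Q (type_class_of z)" if "length z = n" for z n
  proof -
    have "exp (- c * real n) = exp (ln m) ^ n" by (simp add: c_def exp_of_nat_mult[symmetric])
    also have "\<dots> = m ^ n" using Q_min(2) by simp
    finally show ?thesis using wprob_type_class_ge_power[OF Q_min(1)] Q_min(2) that by fastforce
  qed
  obtain \<epsilon> \<delta>' \<eta> :: real and q :: nat where "\<epsilon> > 0" "\<delta>' > 0" "\<eta> > 0" and parameters:
    "\<And>E1 E2. \<delta> < E1 \<Longrightarrow> \<delta> < E2 \<Longrightarrow>
      real q * (E1 - \<delta>) + \<eta> \<le> real (Suc q) * (E1 - \<delta>') \<and>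
      real q * (E2 - \<delta>) + c + \<eta> \<le> real (Suc q) * (E2 - \<delta>') \<and>
      real q * (\<gamma> + \<epsilon>) + \<eta> \<le> real (Suc q) * (\<gamma> - \<delta>')"
    using exists_amplification_parameters[OF \<open>c \<ge> 0\<close> \<open>\<delta> > 0\<close> \<open>\<gamma> > 0\<close>] by metis
  obtain n0 where tests: "\<forall>n\<ge>n0. \<exists>A1 A2 AO. partition3 n A1 A2 AO \<and>
      wprob P A2 \<le> exp (- (E1 - \<delta>') * real n) \<and>
      wprob Q A1 \<le> exp (- (E2 - \<delta>') * real n) \<and>
      wprob P AO + wprob Q AO \<le> exp (- (\<gamma> - \<delta>') * real n)"
    using rej \<open>\<delta>' > 0\<close> unfolding R_rej_def by blast
  have large: "eventually (\<lambda>n. 3 * (real n + 1) ^ CARD('a) < exp (\<eta> * real n) \<and> max n0 1 \<le> n)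
      sequentially"
    using eventually_poly_less_exp[OF \<open>\<eta> > 0\<close>] eventually_ge_at_top by (rule eventually_conj)
  show ?thesis
  proof (rule exI[of _ \<epsilon>], rule conjI[OF \<open>\<epsilon> > 0\<close>], rule eventually_mono[OF large],
      intro allI impI, elim conjE)
    fix n v
    assume poly: "3 * (real n + 1) ^ CARD('a) < exp (\<eta> * real n)" and "max n0 1 \<le> n"
      and v: "length v = n"
      and big1: "exp (- (E1 - \<delta>) * real n) < wprob P (type_class_of v)"
      and big2: "exp (- (E2 - \<delta>) * real n) < wprob Q (type_class_of v)"
    then have "n > 0" "n0 \<le> Suc q * n" by auto
    have "\<delta> < E1" "\<delta> < E2"
      using exponent_gt_if_exp_less_wprob[OF big1 _ \<open>n > 0\<close>]
        exponent_gt_if_exp_less_wprob[OF big2 _ \<open>n > 0\<close>]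
        type_class_subset_lists_length[of v] v by auto
    have exp_Suc_q: "exp (- y * real (Suc q * n)) = exp (- (real (Suc q) * y) * real n)" for y
      by (simp add: algebra_simps)
    obtain A1 A2 AO where A: "partition3 (Suc q * n) A1 A2 AO"
      "wprob P A2 \<le> exp (- (real (Suc q) * (E1 - \<delta>')) * real n)"
      "wprob Q A1 \<le> exp (- (real (Suc q) * (E2 - \<delta>')) * real n)"
      "wprob P AO + wprob Q AO \<le> exp (- (real (Suc q) * (\<gamma> - \<delta>')) * real n)"
      using tests[rule_format, OF \<open>n0 \<le> Suc q * n\<close>] unfolding exp_Suc_q by blast
    then have AO: "wprob P AO \<le> exp (- (real (Suc q) * (\<gamma> - \<delta>')) * real n)"
      using wprob_nonneg[of Q AO] by linarith
    show "wprob P (type_class_of v) \<le> exp (- (\<gamma> + \<epsilon>) * real n)"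
    proof (rule ccontr)
      assume "\<not> ?thesis"
      then have "exp (- (\<gamma> + \<epsilon>) * real n) \<le> wprob P (type_class_of v)" by simp
      from type_class_amplification[OF A(1) v \<open>n > 0\<close> poly Q_types less_imp_le[OF big1] this
          less_imp_le[OF big2] A(2,3) AO]
      show False using parameters[OF \<open>\<delta> < E1\<close> \<open>\<delta> < E2\<close>] by linarith
    qed
  qed
qed

lemma R_rej_swap:
  assumes "(E1, E2) \<in> R_rej P1 P2 \<gamma>"
  shows "(E2, E1) \<in> R_rej P2 P1 \<gamma>"
  unfolding R_rej_def
proof clarify
  fix \<delta> :: real assume "\<delta> > 0"
  then obtain n0 where tests: "\<forall>n\<ge>n0. \<exists>A1 A2 AO. partition3 n A1 A2 AO \<and>
      wprob P1 A2 \<le> exp (- (E1 - \<delta>) * real n) \<and>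
      wprob P2 A1 \<le> exp (- (E2 - \<delta>) * real n) \<and>
      wprob P1 AO + wprob P2 AO \<le> exp (- (\<gamma> - \<delta>) * real n)"
    using assms unfolding R_rej_def by blast
  have "partition3 n A2 A1 AO" if "partition3 n A1 A2 AO" for n and A1 A2 AO :: "'a list set"
    using that unfolding partition3_def by blast
  then show "\<exists>n0. \<forall>n\<ge>n0. \<exists>A1 A2 AO. partition3 n A1 A2 AO \<and>
      wprob P2 A2 \<le> exp (- (E2 - \<delta>) * real n) \<and>
      wprob P1 A1 \<le> exp (- (E1 - \<delta>) * real n) \<and>
      wprob P2 AO + wprob P1 AO \<le> exp (- (\<gamma> - \<delta>) * real n)"
    using tests by (metis add.commute)
qed

lemma exists_pos_le_pmf:
  assumes "set_pmf (P::'a::finite pmf) = UNIV"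
  shows "\<exists>m>0. \<forall>x. m \<le> pmf P x"
proof -
  have "pmf P x > 0" for x using assms by (metis UNIV_I pmf_positive)
  then show ?thesis by (intro exI[of _ "Min (range (pmf P))"]) (auto simp: Min_gr_iff)
qed

lemma R_rej_type_class_bound_both:
  fixes P1 P2 :: "'a::finite pmf"
  assumes rej: "(E1, E2) \<in> R_rej P1 P2 \<gamma>" and "\<gamma> > 0" "\<delta> > 0"
    and "set_pmf P1 = UNIV" "set_pmf P2 = UNIV"
  shows "\<exists>\<epsilon>>0. eventually (\<lambda>n. \<forall>v. length v = n \<longrightarrow>
     exp (- (E1 - \<delta>) * real n) < wprob P1 (type_class_of v) \<longrightarrow>
     exp (- (E2 - \<delta>) * real n) < wprob P2 (type_class_of v) \<longrightarrow>
     wprob P1 (type_class_of v) \<le> exp (- (\<gamma> + \<epsilon>) * real n) \<and>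
     wprob P2 (type_class_of v) \<le> exp (- (\<gamma> + \<epsilon>) * real n)) sequentially"
proof -
  obtain m1 m2 where "m1 > 0" "\<And>x. m1 \<le> pmf P1 x" "m2 > 0" "\<And>x. m2 \<le> pmf P2 x"
    using exists_pos_le_pmf assms(4,5) by metis
  obtain \<epsilon>1 where "\<epsilon>1 > 0" and ev1: "eventually (\<lambda>n. \<forall>v. length v = n \<longrightarrow>
     exp (- (E1 - \<delta>) * real n) < wprob P1 (type_class_of v) \<longrightarrow>
     exp (- (E2 - \<delta>) * real n) < wprob P2 (type_class_of v) \<longrightarrow>
     wprob P1 (type_class_of v) \<le> exp (- (\<gamma> + \<epsilon>1) * real n)) sequentially"
    using R_rej_type_class_bound[OF rej \<open>\<gamma> > 0\<close> \<open>\<delta> > 0\<close> \<open>\<And>x. m2 \<le> pmf P2 x\<close> \<open>m2 > 0\<close>] by blast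
  obtain \<epsilon>2 where "\<epsilon>2 > 0" and ev2: "eventually (\<lambda>n. \<forall>v. length v = n \<longrightarrow>
     exp (- (E2 - \<delta>) * real n) < wprob P2 (type_class_of v) \<longrightarrow>
     exp (- (E1 - \<delta>) * real n) < wprob P1 (type_class_of v) \<longrightarrow>
     wprob P2 (type_class_of v) \<le> exp (- (\<gamma> + \<epsilon>2) * real n)) sequentially"
    using R_rej_type_class_bound[OF R_rej_swap[OF rej] \<open>\<gamma> > 0\<close> \<open>\<delta> > 0\<close>
        \<open>\<And>x. m1 \<le> pmf P1 x\<close> \<open>m1 > 0\<close>] by blast
  have exp_mono: "exp (- (\<gamma> + \<epsilon>') * real n) \<le> exp (- (\<gamma> + min \<epsilon>1 \<epsilon>2) * real n)"
    if "min \<epsilon>1 \<epsilon>2 \<le> \<epsilon>'" for \<epsilon>' n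
    using that by (simp add: mult_right_mono)
  show ?thesis
  proof (intro exI[of _ "min \<epsilon>1 \<epsilon>2"] conjI)
    show "min \<epsilon>1 \<epsilon>2 > 0" using \<open>\<epsilon>1 > 0\<close> \<open>\<epsilon>2 > 0\<close> by simp
    show "eventually (\<lambda>n. \<forall>v. length v = n \<longrightarrow>
       exp (- (E1 - \<delta>) * real n) < wprob P1 (type_class_of v) \<longrightarrow>
       exp (- (E2 - \<delta>) * real n) < wprob P2 (type_class_of v) \<longrightarrow>
       wprob P1 (type_class_of v) \<le> exp (- (\<gamma> + min \<epsilon>1 \<epsilon>2) * real n) \<and>
       wprob P2 (type_class_of v) \<le> exp (- (\<gamma> + min \<epsilon>1 \<epsilon>2) * real n)) sequentially"
      using ev1 ev2
      by eventually_elim (blast intro: order_trans[OF _ exp_mono] min.cobounded1 min.cobounded2)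
  qed
qed

lemma R_rej_rejection_bound:
  fixes P1 P2 :: "'a::finite pmf"
  assumes rej: "(E1, E2) \<in> R_rej P1 P2 \<gamma>" and "\<gamma> \<ge> 0" "\<delta> > 0"
    and supp: "set_pmf P1 = UNIV" "set_pmf P2 = UNIV"
  shows "eventually (\<lambda>n. \<forall>AO. AO \<subseteq> {v. length v = n} \<longrightarrow>
      (\<forall>v\<in>AO. exp (- (E1 - \<delta>) * real n) < wprob P1 (type_class_of v) \<and>
        exp (- (E2 - \<delta>) * real n) < wprob P2 (type_class_of v)) \<longrightarrow>
      wprob P1 AO \<le> exp (- \<gamma> * real n) \<and> wprob P2 AO \<le> exp (- \<gamma> * real n)) sequentially"
proof (cases "\<gamma> = 0")
  case True
  then show ?thesis by (intro always_eventually) (auto intro: wprob_le_1)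
next
  case False
  with \<open>\<gamma> \<ge> 0\<close> have "\<gamma> > 0" by simp
  let ?k = "CARD('a)"
  obtain \<epsilon> where "\<epsilon> > 0" and classes: "eventually (\<lambda>n. \<forall>v. length v = n \<longrightarrow>
     exp (- (E1 - \<delta>) * real n) < wprob P1 (type_class_of v) \<longrightarrow>
     exp (- (E2 - \<delta>) * real n) < wprob P2 (type_class_of v) \<longrightarrow>
     wprob P1 (type_class_of v) \<le> exp (- (\<gamma> + \<epsilon>) * real n) \<and>
     wprob P2 (type_class_of v) \<le> exp (- (\<gamma> + \<epsilon>) * real n)) sequentially"
    using R_rej_type_class_bound_both[OF rej \<open>\<gamma> > 0\<close> \<open>\<delta> > 0\<close> supp] by blast
  show ?thesis
    using eventually_conj[OF classes eventually_poly_mult_exp_le[OF \<open>\<epsilon> > 0\<close>, of ?k]]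
  proof (rule eventually_mono, intro allI impI, elim conjE)
    fix n AO assume types: "\<forall>v. length v = n \<longrightarrow>
       exp (- (E1 - \<delta>) * real n) < wprob P1 (type_class_of v) \<longrightarrow>
       exp (- (E2 - \<delta>) * real n) < wprob P2 (type_class_of v) \<longrightarrow>
       wprob P1 (type_class_of v) \<le> exp (- (\<gamma> + \<epsilon>) * real n) \<and>
       wprob P2 (type_class_of v) \<le> exp (- (\<gamma> + \<epsilon>) * real n)"
      and poly: "\<forall>a. real ((n + 1) ^ ?k) * exp (- a * real n) \<le> exp (- (a - \<epsilon>) * real n)"
      and AO: "AO \<subseteq> {v. length v = n}"
        "\<forall>v\<in>AO. exp (- (E1 - \<delta>) * real n) < wprob P1 (type_class_of v) \<and>
          exp (- (E2 - \<delta>) * real n) < wprob P2 (type_class_of v)"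
    have "wprob P AO \<le> exp (- \<gamma> * real n)" if "P = P1 \<or> P = P2" for P
    proof -
      have "wprob P AO \<le> real ((n + 1) ^ ?k) * exp (- (\<gamma> + \<epsilon>) * real n)"
        by (rule wprob_le_if_type_classes_le[OF AO(1)]) (use types AO that in auto)
      also have "\<dots> \<le> exp (- (\<gamma> + \<epsilon> - \<epsilon>) * real n)" using poly by blast
      finally show ?thesis by simp
    qed
    then show "wprob P1 AO \<le> exp (- \<gamma> * real n) \<and> wprob P2 AO \<le> exp (- \<gamma> * real n)"
      by blast
  qed
qed

lemma R_rej_balanced:
  fixes P1 P2 :: "'a::finite pmf"
  assumes rej: "(E1, E2) \<in> R_rej P1 P2 \<gamma>" and "\<gamma> \<ge> 0" "\<delta> > 0"
    and supp: "set_pmf P1 = UNIV" "set_pmf P2 = UNIV"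
  shows "eventually (\<lambda>n. \<exists>A1 A2 AO. partition3 n A1 A2 AO \<and>
     wprob P1 A2 \<le> exp (- (E1 - \<delta>) * real n) \<and> wprob P2 A1 \<le> exp (- (E2 - \<delta>) * real n) \<and>
     wprob P1 AO \<le> exp (- \<gamma> * real n) \<and> wprob P2 AO \<le> exp (- \<gamma> * real n)) sequentially"
proof -
  let ?k = "CARD('a)"
  define t1 where "t1 n = exp (- (E1 - \<delta> / 2) * real n)" for n :: nat
  define t2 where "t2 n = exp (- (E2 - \<delta> / 2) * real n)" for n :: nat
  have "\<delta> / 2 > 0" using \<open>\<delta> > 0\<close> by simp
  note rejection = R_rej_rejection_bound[OF rej \<open>\<gamma> \<ge> 0\<close> \<open>\<delta> / 2 > 0\<close> supp, folded t1_def t2_def]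
  show ?thesis
    using eventually_conj[OF rejection eventually_poly_mult_exp_le[OF \<open>\<delta> / 2 > 0\<close>, of ?k]]
  proof (rule eventually_mono, elim conjE)
    fix n assume rejection_n: "\<forall>AO. AO \<subseteq> {v. length v = n} \<longrightarrow>
      (\<forall>v\<in>AO. t1 n < wprob P1 (type_class_of v) \<and> t2 n < wprob P2 (type_class_of v)) \<longrightarrow>
      wprob P1 AO \<le> exp (- \<gamma> * real n) \<and> wprob P2 AO \<le> exp (- \<gamma> * real n)"
      and poly: "\<forall>a. real ((n + 1) ^ ?k) * exp (- a * real n) \<le> exp (- (a - \<delta> / 2) * real n)"
    obtain A1 A2 AO where A: "partition3 n A1 A2 AO"
      "wprob P1 A2 \<le> real ((n + 1) ^ ?k) * t1 n" "wprob P2 A1 \<le> real ((n + 1) ^ ?k) * t2 n"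
      "\<And>v. v \<in> AO \<Longrightarrow> t1 n < wprob P1 (type_class_of v) \<and> t2 n < wprob P2 (type_class_of v)"
      using exists_type_class_partition[of "t1 n" "t2 n" n P1 P2] unfolding t1_def t2_def by auto
    have "AO \<subseteq> {v. length v = n}" using A(1) unfolding partition3_def by blast
    then have "wprob P1 AO \<le> exp (- \<gamma> * real n) \<and> wprob P2 AO \<le> exp (- \<gamma> * real n)"
      using rejection_n A(4) by blast
    moreover have "wprob P1 A2 \<le> exp (- (E1 - \<delta>) * real n)" "wprob P2 A1 \<le> exp (- (E2 - \<delta>) * real n)"
      using A(2,3) poly[rule_format, of "E1 - \<delta> / 2"] poly[rule_format, of "E2 - \<delta> / 2"]
      unfolding t1_def t2_def by simp_all
    ultimately show "\<exists>A1 A2 AO. partition3 n A1 A2 AO \<and>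
     wprob P1 A2 \<le> exp (- (E1 - \<delta>) * real n) \<and> wprob P2 A1 \<le> exp (- (E2 - \<delta>) * real n) \<and>
     wprob P1 AO \<le> exp (- \<gamma> * real n) \<and> wprob P2 AO \<le> exp (- \<gamma> * real n)"
      using A(1) by blast
  qed
qed

section \<open>The likelihood-ratio test\<close>

lemma sqrt_prod_list_mult:
  fixes f g :: "'a \<Rightarrow> real"
  shows "sqrt ((\<Prod>x\<leftarrow>v. f x) * (\<Prod>x\<leftarrow>v. g x)) = (\<Prod>x\<leftarrow>v. sqrt (f x * g x))"
  by (induction v) (simp_all add: real_sqrt_mult mult_ac)

lemma sqrt_mult_less_mean:
  fixes a b :: real
  assumes "a \<ge> 0" "b \<ge> 0" "a \<noteq> b"
  shows "sqrt (a * b) < (a + b) / 2"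
proof (rule real_less_lsqrt)
  have "(a + b)\<^sup>2 = (a - b)\<^sup>2 + 4 * (a * b)" by (simp add: power2_eq_square algebra_simps)
  moreover have "(a - b)\<^sup>2 > 0" using assms(3) by simp
  ultimately show "a * b < ((a + b) / 2)\<^sup>2" by (simp add: power_divide)
qed (use assms in simp)

lemma bhattacharyya_less_1:
  fixes P Q :: "'a::finite pmf"
  assumes "P \<noteq> Q"
  shows "(\<Sum>x\<in>UNIV. sqrt (pmf P x * pmf Q x)) < 1"
proof -
  obtain x0 where "pmf P x0 \<noteq> pmf Q x0" using assms pmf_eqI by metis
  then have "(\<Sum>x\<in>UNIV. sqrt (pmf P x * pmf Q x)) < (\<Sum>x\<in>UNIV. (pmf P x + pmf Q x) / 2)"
  proof (intro sum_strict_mono_ex1 ballI arith_geo_mean_sqrt pmf_nonneg)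
    show "\<exists>x\<in>UNIV. sqrt (pmf P x * pmf Q x) < (pmf P x + pmf Q x) / 2"
      using sqrt_mult_less_mean[OF pmf_nonneg pmf_nonneg \<open>pmf P x0 \<noteq> pmf Q x0\<close>] by blast
  qed simp
  also have "\<dots> = 1"
    by (simp add: sum_divide_distrib[symmetric] sum.distrib sum_pmf_eq_1)
  finally show ?thesis .
qed

lemma wprob_likelihood_le:
  fixes P Q :: "'a::finite pmf"
  shows "wprob P {v. length v = m \<and> wprob P {v} \<le> wprob Q {v}}
    \<le> (\<Sum>x\<in>UNIV. sqrt (pmf P x * pmf Q x)) ^ m"
proof -
  have "wprob P {v. length v = m \<and> wprob P {v} \<le> wprob Q {v}}
      = (\<Sum>v | length v = m \<and> wprob P {v} \<le> wprob Q {v}. wprob P {v})"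
    by (subst wprob_def) (simp add: wprob_singleton)
  also have "\<dots> \<le> (\<Sum>v | length v = m \<and> wprob P {v} \<le> wprob Q {v}. sqrt (wprob P {v} * wprob Q {v}))"
  proof (rule sum_mono)
    fix v assume "v \<in> {v. length v = m \<and> wprob P {v} \<le> wprob Q {v}}"
    then have "wprob P {v} * wprob P {v} \<le> wprob P {v} * wprob Q {v}"
      using wprob_nonneg[of P "{v}"] by (auto intro: mult_left_mono)
    then have "sqrt (wprob P {v} * wprob P {v}) \<le> sqrt (wprob P {v} * wprob Q {v})"
      by (rule real_sqrt_le_mono)
    then show "wprob P {v} \<le> sqrt (wprob P {v} * wprob Q {v})"
      using wprob_nonneg[of P "{v}"] by simp
  qed
  also have "\<dots> \<le> (\<Sum>v | length v = m. sqrt (wprob P {v} * wprob Q {v}))"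
    by (rule sum_mono2[OF finite_lists_length]) (auto simp: wprob_nonneg)
  also have "\<dots> = (\<Sum>x\<in>UNIV. sqrt (pmf P x * pmf Q x)) ^ m"
    by (simp add: wprob_singleton sqrt_prod_list_mult sum_prod_list_lists_length)
  finally show ?thesis .
qed

lemma likelihood_ratio_test_errors:
  fixes P1 P2 :: "'a::finite pmf"
  assumes "P1 \<noteq> P2"
  obtains \<rho> where "0 \<le> \<rho>" "\<rho> < 1"
    "\<And>k. wprob P1 {v. length v = k \<and> wprob P1 {v} \<le> wprob P2 {v}} \<le> \<rho> ^ k"
    "\<And>k. wprob P2 {v. length v = k \<and> \<not> wprob P1 {v} \<le> wprob P2 {v}} \<le> \<rho> ^ k"
proof
  let ?\<rho> = "\<Sum>x\<in>UNIV. sqrt (pmf P1 x * pmf P2 x)"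
  show "0 \<le> ?\<rho>" by (auto intro: sum_nonneg)
  show "?\<rho> < 1" using bhattacharyya_less_1[OF assms] .
  show "wprob P1 {v. length v = k \<and> wprob P1 {v} \<le> wprob P2 {v}} \<le> ?\<rho> ^ k" for k
    by (rule wprob_likelihood_le)
  fix k
  have "wprob P2 {v. length v = k \<and> \<not> wprob P1 {v} \<le> wprob P2 {v}}
      \<le> wprob P2 {v. length v = k \<and> wprob P2 {v} \<le> wprob P1 {v}}"
    by (rule wprob_mono[OF _ finite_subset[OF _ finite_lists_length[of k]]]) auto
  also have "\<dots> \<le> ?\<rho> ^ k"
    using wprob_likelihood_le[of P2 k P1] by (simp add: mult.commute)
  finally show "wprob P2 {v. length v = k \<and> \<not> wprob P1 {v} \<le> wprob P2 {v}} \<le> ?\<rho> ^ k" .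
qed

section \<open>Two-stage sequential tests\<close>

definition two_stage_stop :: "nat \<Rightarrow> nat \<Rightarrow> 'a list set \<Rightarrow> 'a list \<Rightarrow> bool" where
  "two_stage_stop n m AO v \<longleftrightarrow> (length v = n \<and> v \<notin> AO) \<or> length v = n + m"

definition two_stage_dec :: "nat \<Rightarrow> 'a list set \<Rightarrow> 'a list set \<Rightarrow> 'a list \<Rightarrow> nat" where
  "two_stage_dec n A2 B v =
     (if length v = n then (if v \<in> A2 then 2 else 1) else if drop n v \<in> B then 2 else 1)"

lemma seq_test_two_stage: "seq_test (n + m) (two_stage_stop n m AO) (two_stage_dec n A2 B)"
  unfolding seq_test_def two_stage_dec_def
  by (auto simp: two_stage_stop_def intro!: exI[of _ "n + m"])

lemma stime_two_stage_stop:
  assumes "length w = n + m" "m > 0"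
  shows "stime (two_stage_stop n m AO) w = (if take n w \<in> AO then n + m else n)"
  unfolding stime_def
proof (rule Least_equality)
  show "two_stage_stop n m AO (take (if take n w \<in> AO then n + m else n) w)"
    using assms by (simp add: two_stage_stop_def)
  fix k assume stop: "two_stage_stop n m AO (take k w)"
  have "take (length (take k w)) w = take k w" by (cases "k \<le> length w") (simp_all add: min_def)
  then have "length (take k w) = n \<and> take n w \<notin> AO \<or> length (take k w) = n + m"
    using stop unfolding two_stage_stop_def by auto
  then show "(if take n w \<in> AO then n + m else n) \<le> k" using assms by auto
qed

lemma sdec_two_stage:
  assumes "length w = n + m" "m > 0"
  shows "sdec (two_stage_stop n m AO) (two_stage_dec n A2 B) w =
    (if take n w \<in> AO then (if drop n w \<in> B then 2 else 1) else if take n w \<in> A2 then 2 else 1)"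
  using assms by (simp add: sdec_def stime_two_stage_stop two_stage_dec_def)

lemma two_stage_test:
  fixes A1 A2 AO B :: "'a::finite list set"
  assumes part: "partition3 n A1 A2 AO" and "m > 0"
  shows "wprob P {w. length w = n + m \<and> stime (two_stage_stop n m AO) w > n} = wprob P AO"
    and "wprob P {w. length w = n + m \<and> sdec (two_stage_stop n m AO) (two_stage_dec n A2 B) w = 2}
       \<le> wprob P A2 + wprob P {v. length v = m \<and> v \<in> B}"
    and "wprob P {w. length w = n + m \<and> sdec (two_stage_stop n m AO) (two_stage_dec n A2 B) w = 1}
       \<le> wprob P A1 + wprob P {v. length v = m \<and> v \<notin> B}"
proof -
  have cover: "A1 \<union> A2 \<union> AO = {v. length v = n}"
    using part unfolding partition3_def by blast
  have "{w. length w = n + m \<and> stime (two_stage_stop n m AO) w > n}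
      = {w. length w = n + m \<and> take n w \<in> AO}"
    using \<open>m > 0\<close> by (auto simp: stime_two_stage_stop split: if_splits)
  then show "wprob P {w. length w = n + m \<and> stime (two_stage_stop n m AO) w > n} = wprob P AO"
    using wprob_take_mem[of AO n "n + m" P] cover by auto
  show "wprob P {w. length w = n + m \<and> sdec (two_stage_stop n m AO) (two_stage_dec n A2 B) w = 2}
       \<le> wprob P A2 + wprob P {v. length v = m \<and> v \<in> B}"
  proof (rule wprob_le_prefix_or_suffix[where R = "\<lambda>v. v \<in> B"])
    fix w :: "'a list"
    assume w: "length w = n + m" "sdec (two_stage_stop n m AO) (two_stage_dec n A2 B) w = 2"
    have "(if take n w \<in> AO then (if drop n w \<in> B then 2 else 1)
        else if take n w \<in> A2 then 2 else 1) = (2::nat)"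
      using w(2) unfolding sdec_two_stage[OF w(1) \<open>m > 0\<close>] .
    then show "take n w \<in> A2 \<or> drop n w \<in> B" by (auto split: if_splits)
  qed (use cover in blast)
  show "wprob P {w. length w = n + m \<and> sdec (two_stage_stop n m AO) (two_stage_dec n A2 B) w = 1}
       \<le> wprob P A1 + wprob P {v. length v = m \<and> v \<notin> B}"
  proof (rule wprob_le_prefix_or_suffix[where R = "\<lambda>v. v \<notin> B"])
    fix w :: "'a list"
    assume w: "length w = n + m" "sdec (two_stage_stop n m AO) (two_stage_dec n A2 B) w = 1"
    have "take n w \<in> A1 \<union> A2 \<union> AO" unfolding cover using w(1) by simp
    moreover have "(if take n w \<in> AO then (if drop n w \<in> B then 2 else 1)
        else if take n w \<in> A2 then 2 else 1) = (1::nat)"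
      using w(2) unfolding sdec_two_stage[OF w(1) \<open>m > 0\<close>] .
    ultimately show "take n w \<in> A1 \<or> drop n w \<notin> B" by (auto split: if_splits)
  qed (use cover in blast)
qed

lemma R_rej_subset_R_seq:
  fixes P1 P2 :: "'a::finite pmf"
  assumes "\<gamma> \<ge> 0" and supp: "set_pmf P1 = UNIV" "set_pmf P2 = UNIV" and "P1 \<noteq> P2"
  shows "R_rej P1 P2 \<gamma> \<subseteq> R_seq P1 P2 \<gamma>"
proof (clarify, unfold R_seq_def, clarify)
  fix E1 E2 \<delta> :: real assume rej: "(E1, E2) \<in> R_rej P1 P2 \<gamma>" and "\<delta> > 0"
  define B where "B = {v::'a list. wprob P1 {v} \<le> wprob P2 {v}}"
  obtain \<rho> where "0 \<le> \<rho>" "\<rho> < 1"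
    and lr: "\<And>k. wprob P1 {v. length v = k \<and> v \<in> B} \<le> \<rho> ^ k"
      "\<And>k. wprob P2 {v. length v = k \<and> v \<notin> B} \<le> \<rho> ^ k"
    using likelihood_ratio_test_errors[OF \<open>P1 \<noteq> P2\<close>] unfolding B_def by auto
  obtain K where "K \<ge> 1" and \<rho>_K: "\<And>n. \<rho> ^ (K * n) \<le> exp (- max E1 E2 * real n)"
    using exists_power_mult_le_exp[OF \<open>0 \<le> \<rho>\<close> \<open>\<rho> < 1\<close>] by blast
  have \<rho>_power: "\<rho> ^ (K * n) \<le> exp (- E1 * real n)" "\<rho> ^ (K * n) \<le> exp (- E2 * real n)" for n
    using \<rho>_K[of n] by (auto intro: order_trans simp: mult_right_mono)
  have "\<delta> / 2 > 0" using \<open>\<delta> > 0\<close> by simp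
  obtain n0 where tests: "\<forall>n\<ge>n0. \<exists>A1 A2 AO. partition3 n A1 A2 AO \<and>
     wprob P1 A2 \<le> exp (- (E1 - \<delta> / 2) * real n) \<and> wprob P2 A1 \<le> exp (- (E2 - \<delta> / 2) * real n) \<and>
     wprob P1 AO \<le> exp (- \<gamma> * real n) \<and> wprob P2 AO \<le> exp (- \<gamma> * real n)"
    using R_rej_balanced[OF rej \<open>\<gamma> \<ge> 0\<close> \<open>\<delta> / 2 > 0\<close> supp] unfolding eventually_sequentially
    by blast
  show "\<exists>l::nat. l \<ge> 1 \<and> (\<exists>C::real. C > 0 \<and> (\<exists>n0. \<forall>n\<ge>n0.
      \<exists>N stp dec. real N \<le> C * real n ^ l \<and> seq_test N stp dec \<and>
        wprob P1 {w. length w = N \<and> stime stp w > n} \<le> exp (- \<gamma> * real n) \<and>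
        wprob P2 {w. length w = N \<and> stime stp w > n} \<le> exp (- \<gamma> * real n) \<and>
        wprob P1 {w. length w = N \<and> sdec stp dec w = 2} \<le> exp (- (E1 - \<delta>) * real n) \<and>
        wprob P2 {w. length w = N \<and> sdec stp dec w = 1} \<le> exp (- (E2 - \<delta>) * real n)))"
  proof (rule exI[of _ 1], rule conjI[OF order_refl], rule exI[of _ "real K + 1"], rule conjI, simp,
      rule exI[of _ "max n0 (max 1 (nat \<lceil>ln 2 / (\<delta> / 2)\<rceil>))"], intro allI impI)
    fix n assume n: "max n0 (max 1 (nat \<lceil>ln 2 / (\<delta> / 2)\<rceil>)) \<le> n"
    then have "n0 \<le> n" "K * n > 0" using \<open>K \<ge> 1\<close> by auto
    then obtain A1 A2 AO where A: "partition3 n A1 A2 AO"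
      "wprob P1 A2 \<le> exp (- (E1 - \<delta> / 2) * real n)" "wprob P2 A1 \<le> exp (- (E2 - \<delta> / 2) * real n)"
      "wprob P1 AO \<le> exp (- \<gamma> * real n)" "wprob P2 AO \<le> exp (- \<gamma> * real n)"
      using tests by blast
    define stp where "stp = two_stage_stop n (K * n) AO"
    define dec where "dec = two_stage_dec n A2 B"
    note T = seq_test_two_stage[of n "K * n" AO A2 B, folded stp_def dec_def]
      two_stage_test(1)[OF A(1) \<open>K * n > 0\<close>, folded stp_def]
      two_stage_test(2-3)[where B = B, OF A(1) \<open>K * n > 0\<close>, folded stp_def dec_def]
    have "ln 2 / (\<delta> / 2) \<le> real n" using n by linarith
    then have two: "2 \<le> exp (\<delta> / 2 * real n)" using two_le_exp \<open>\<delta> / 2 > 0\<close> by blast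
    have "wprob P1 {w. length w = n + K * n \<and> sdec stp dec w = 2} \<le> exp (- (E1 - \<delta>) * real n)"
      using T(3)[of P1] add_exp_le_exp[OF two A(2) order_trans[OF lr(1) \<rho>_power(1)]] \<open>\<delta> > 0\<close>
      by fastforce
    moreover have "wprob P2 {w. length w = n + K * n \<and> sdec stp dec w = 1} \<le> exp (- (E2 - \<delta>) * real n)"
      using T(4)[of P2] add_exp_le_exp[OF two A(3) order_trans[OF lr(2) \<rho>_power(2)]] \<open>\<delta> > 0\<close>
      by fastforce
    moreover have "real (n + K * n) \<le> (real K + 1) * real n ^ 1" by (simp add: algebra_simps)
    ultimately show "\<exists>N stp dec. real N \<le> (real K + 1) * real n ^ 1 \<and> seq_test N stp dec \<and>
        wprob P1 {w. length w = N \<and> stime stp w > n} \<le> exp (- \<gamma> * real n) \<and>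
        wprob P2 {w. length w = N \<and> stime stp w > n} \<le> exp (- \<gamma> * real n) \<and>
        wprob P1 {w. length w = N \<and> sdec stp dec w = 2} \<le> exp (- (E1 - \<delta>) * real n) \<and>
        wprob P2 {w. length w = N \<and> sdec stp dec w = 1} \<le> exp (- (E2 - \<delta>) * real n)"
      using T(1) T(2)[of P1] T(2)[of P2] A(4,5) by (intro exI[of _ "n + K * n"] exI[of _ stp] exI[of _ dec]) simp
  qed
qed

theorem lemma1:
  fixes P1 P2 :: "'a::finite pmf" and \<gamma> :: real
  assumes "set_pmf P1 = UNIV" and "set_pmf P2 = UNIV" and "P1 \<noteq> P2"
    and "\<gamma> \<ge> 0"
  shows "R_rej P1 P2 \<gamma> = R_seq P1 P2 \<gamma>"
  using R_rej_subset_R_seq[OF assms(4,1,2,3)] R_seq_subset_R_rej by (rule subset_antisym)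

end
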